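(* Consider the constrained decoding algorithm below, run with a language model $\mathsf{lm}$ and an AST predicate $\varphi$, using a function $\mathsf{realizable}$ that is both over-approximate and consistent, and with a worklist implementing fair enumeration (every string that has been enqueued is eventually dequeued). Then constrained decoding is complete: if there exists a string $\omega^*\in\Sigma^*$ with $\varphi(\mathsf{parse}(\omega^* ))$, the algorithm returns a solution (a string $\omega$ with $\varphi(\mathsf{parse}(\omega))$).
   Context: Let $\Sigma$ be a finite alphabet, $\mathsf{AST}$ a set of abstract syntax trees, and $\mathsf{parse}\colon \Sigma^*\to\mathsf{AST}\cup\{\bot\}$ a parsing function. A semantic constraint is a predicate $\varphi\colon\mathsf{AST}\to\mathrm{bool}$ (taken false on $\bot$). A token vocabulary $\mathcal{T}$ is a set of finite strings over $\Sigma$ such that every string in $\Sigma^*$ is a concatenation of tokens; it contains a distinguished one-character token $\mathsf{END}$. Token sequences are identified with the strings they concatenate to. It is assumed that every string satisfying the constraint contains $\mathsf{END}$ exactly once, as its last character. A language model is a function $\mathsf{lm}\colon\mathcal{T}^*\to\mathcal{T}\to[0,1]$. Constrained decoding algorithm: initialize a worklist (an abstract queue data structure with operations enqueue/dequeue) to contain only the empty string $\epsilon$. While the worklist is nonempty: dequeue a string $\omega$; for each $\tau\in\mathcal{T}$, if $\mathsf{realizable}(\omega\tau,\varphi)$ holds then, if $\tau=\mathsf{END}$, return $\omega\tau$; otherwise enqueue $\omega\tau$ with priority $\mathsf{lm}(\omega,\tau)$. If the worklist becomes empty, return $\bot$. A realizability checker is over-approximate if $\big(\exists\omega'\in\Sigma^*.\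 \varphi(\mathsf{parse}(\omega\omega'))\big)\Rightarrow\mathsf{realizable}(\omega,\varphi)$ for all $\omega$; it is consistent if for every $\omega$ whose last character is $\mathsf{END}$, $\mathsf{realizable}(\omega,\varphi)\Leftrightarrow\varphi(\mathsf{parse}(\omega))$. *)

theory Defs
  imports Complex_Main "HOL-Library.Multiset"
begin

text \<open>Strings over the alphabet 'a are lists. Parsing failure (bottom) is None.
  A semantic constraint is lifted to parse results: false on None.\<close>

definition sat :: "('ast \<Rightarrow> bool) \<Rightarrow> 'ast option \<Rightarrow> bool" where
  "sat phi r = (case r of None \<Rightarrow> False | Some t \<Rightarrow> phi t)"

definition token_vocabulary :: "'a list set \<Rightarrow> 'a \<Rightarrow> bool" where
  "token_vocabulary T END \<longleftrightarrow>
     (\<forall>w. \<exists>ts. set ts \<subseteq> T \<and> concat ts = w) \<and> [END] \<in> T"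

definition over_approximate ::
  "('a list \<Rightarrow> 'ast option) \<Rightarrow> ('ast \<Rightarrow> bool) \<Rightarrow> ('a list \<Rightarrow> bool) \<Rightarrow> bool" where
  "over_approximate parse phi realizable \<longleftrightarrow>
     (\<forall>w. (\<exists>w'. sat phi (parse (w @ w'))) \<longrightarrow> realizable w)"

definition consistent ::
  "('a list \<Rightarrow> 'ast option) \<Rightarrow> ('ast \<Rightarrow> bool) \<Rightarrow> 'a \<Rightarrow> ('a list \<Rightarrow> bool) \<Rightarrow> bool" where
  "consistent parse phi END realizable \<longleftrightarrow>
     (\<forall>w. w \<noteq> [] \<and> last w = END \<longrightarrow> (realizable w \<longleftrightarrow> sat phi (parse w)))"

text \<open>The worklist is modelled abstractly as a
  multiset of entries (string, priority); the initial entry (the empty string) carries no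
  priority (None), entries enqueued for token tau carry Some (lm w tau). Dequeue may pick
  any entry (covering every queue implementation); fairness is a separate hypothesis on runs.\<close>

datatype 'a dstate = Running "('a list \<times> real option) multiset" | Halted "'a list option"

definition expand ::
  "'a list set \<Rightarrow> 'a \<Rightarrow> ('a list \<Rightarrow> bool) \<Rightarrow> ('a list \<Rightarrow> 'a list \<Rightarrow> real) \<Rightarrow> 'a list
     \<Rightarrow> ('a list \<times> real option) multiset" where
  "expand T END realizable lm w =
     image_mset (\<lambda>tau. (w @ tau, Some (lm w tau)))
       (mset_set {tau \<in> T. tau \<noteq> [END] \<and> realizable (w @ tau)})"

inductive dstep ::
  "'a list set \<Rightarrow> 'a \<Rightarrow> ('a list \<Rightarrow> bool) \<Rightarrow> ('a list \<Rightarrow> 'a list \<Rightarrow> real)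
     \<Rightarrow> 'a dstate \<Rightarrow> ('a list \<times> real option) option \<Rightarrow> 'a dstate \<Rightarrow> bool"
  for T END realizable lm where
  empty: "dstep T END realizable lm (Running {#}) None (Halted None)"
| found: "e \<in># W \<Longrightarrow> realizable (fst e @ [END]) \<Longrightarrow>
          dstep T END realizable lm (Running W) (Some e) (Halted (Some (fst e @ [END])))"
| cont: "e \<in># W \<Longrightarrow> \<not> realizable (fst e @ [END]) \<Longrightarrow>
          dstep T END realizable lm (Running W) (Some e)
            (Running (W - {#e#} + expand T END realizable lm (fst e)))"

text \<open>A (possibly infinite) run: s n is the state before iteration n, d n the entry
  dequeued in iteration n. Once halted, the state stays put.\<close>

definition decoding_run ::
  "'a list set \<Rightarrow> 'a \<Rightarrow> ('a list \<Rightarrow> bool) \<Rightarrow> ('a list \<Rightarrow> 'a list \<Rightarrow> real)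
     \<Rightarrow> (nat \<Rightarrow> 'a dstate) \<Rightarrow> (nat \<Rightarrow> ('a list \<times> real option) option) \<Rightarrow> bool" where
  "decoding_run T END realizable lm s d \<longleftrightarrow>
     s 0 = Running {#([], None)#} \<and>
     (\<forall>n. case s n of
            Running W \<Rightarrow> dstep T END realizable lm (s n) (d n) (s (Suc n))
          | Halted r \<Rightarrow> s (Suc n) = s n)"

definition fair_run ::
  "(nat \<Rightarrow> 'a dstate) \<Rightarrow> (nat \<Rightarrow> ('a list \<times> real option) option) \<Rightarrow> bool" where
  "fair_run s d \<longleftrightarrow>
     (\<forall>n W e. s n = Running W \<and> e \<in># W \<longrightarrow>
        (\<exists>m\<ge>n. (\<exists>W'. s m = Running W') \<and> d m = Some e) \<or> (\<exists>m r. s m = Halted r))"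

end

theory Submission
  imports Defs
begin

text \<open>Cut a solution \<open>w\<^sub>0 @ [END]\<close> into non-\<open>END\<close> tokens \<open>t\<^sub>1 \<dots> t\<^sub>n\<close>. By
  over-approximation every prefix \<open>t\<^sub>1 \<dots> t\<^sub>k\<close> passes the realizability check, so the
  worklist always contains one of these prefixes: the algorithm never stops with \<open>\<bottom>\<close>, and
  by fairness the prefix in the worklist is dequeued and replaced by the next one, until
  \<open>w\<^sub>0\<close> itself is dequeued and \<open>w\<^sub>0 @ [END]\<close> is accepted. Consistency makes every
  accepted string a solution.\<close>

lemma decoding_run_Running_dstep:
  assumes "decoding_run T END realizable lm s d" and "s n = Running W"
  shows "dstep T END realizable lm (Running W) (d n) (s (Suc n))"
  using assms unfolding decoding_run_def by (metis dstate.simps(5))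

lemma decoding_run_Halted_stays:
  assumes "decoding_run T END realizable lm s d" and "s n = Halted r"
  shows "s (Suc n) = Halted r"
  using assms unfolding decoding_run_def by (metis dstate.simps(6))

lemma dstep_Halted_Some_sat:
  assumes "consistent parse phi END realizable"
    and "dstep T END realizable lm S e (Halted (Some w))"
  shows "sat phi (parse w)"
  using assms(2) by cases (use assms(1) in \<open>auto simp: consistent_def\<close>)

lemma decoding_run_Halted_Some_sat:
  assumes "consistent parse phi END realizable"
    and "decoding_run T END realizable lm s d"
    and "s n = Halted (Some w)"
  shows "sat phi (parse w)"
  using assms(3)
proof (induction n)
  case 0
  with assms(2) show ?case by (simp add: decoding_run_def)
next
  case (Suc n)
  show ?case
  proof (cases "s n")
    case (Running W)
    with decoding_run_Running_dstep[OF assms(2)] Suc.prems show ?thesis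
      by (metis dstep_Halted_Some_sat[OF assms(1)])
  next
    case (Halted r)
    with decoding_run_Halted_stays[OF assms(2)] Suc show ?thesis by simp
  qed
qed

lemma dstep_keeps_entry:
  assumes "dstep T END realizable lm (Running W) e S'"
    and "x \<in># W" and "e \<noteq> Some x"
  shows "(\<exists>w. S' = Halted (Some w)) \<or> (\<exists>W'. S' = Running W' \<and> x \<in># W')"
  using assms(1)
proof cases
  case (cont e')
  with assms(2,3) show ?thesis by (auto simp: in_diff_count)
qed (use assms(2) in auto)

lemma over_approximate_prefix:
  assumes "over_approximate parse phi realizable" and "sat phi (parse (u @ v))"
  shows "realizable u"
  using assms unfolding over_approximate_def by blast

definition realizable_path ::
  "'a list set \<Rightarrow> 'a \<Rightarrow> ('a list \<Rightarrow> bool) \<Rightarrow> 'a list list \<Rightarrow> bool" where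
  "realizable_path T END realizable ts \<longleftrightarrow>
     set ts \<subseteq> T \<and> [END] \<notin> set ts \<and>
     (\<forall>k < length ts. realizable (concat (take (Suc k) ts))) \<and>
     realizable (concat ts @ [END])"

definition worklist_meets_path ::
  "'a list list \<Rightarrow> ('a list \<times> real option) multiset \<Rightarrow> bool" where
  "worklist_meets_path ts W \<longleftrightarrow> (\<exists>k \<le> length ts. \<exists>pr. (concat (take k ts), pr) \<in># W)"

lemma realizable_path_exists:
  assumes "token_vocabulary T END" and "over_approximate parse phi realizable"
    and "sat phi (parse (w0 @ [END]))" and "END \<notin> set w0"
  shows "\<exists>ts. realizable_path T END realizable ts"
proof -
  obtain ts where ts: "set ts \<subseteq> T" "concat ts = w0"
    using assms(1) unfolding token_vocabulary_def by blast
  have "[END] \<notin> set ts"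
    using ts(2) assms(4) by force
  moreover have "realizable (concat (take (Suc k) ts))" for k
  proof -
    have "concat (take (Suc k) ts) @ concat (drop (Suc k) ts) @ [END] = w0 @ [END]"
      by (metis append.assoc append_take_drop_id concat_append ts(2))
    then show ?thesis
      using over_approximate_prefix[OF assms(2)] assms(3) by metis
  qed
  moreover have "realizable (concat ts @ [END])"
    using over_approximate_prefix[OF assms(2), of _ "[]"] assms(3) ts(2) by simp
  ultimately show ?thesis
    using ts(1) unfolding realizable_path_def by blast
qed

lemma in_expand:
  assumes "finite T" and "tau \<in> T" and "tau \<noteq> [END]" and "realizable (w @ tau)"
  shows "(w @ tau, Some (lm w tau)) \<in># expand T END realizable lm w"
  using assms by (auto simp: expand_def)

lemma dstep_path_advance:
  assumes "finite T" and "realizable_path T END realizable ts" and "k \<le> length ts"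
    and "dstep T END realizable lm (Running W) (Some (concat (take k ts), pr)) S'"
  shows "(\<exists>w. S' = Halted (Some w)) \<or>
    (\<exists>W' pr'. S' = Running W' \<and> k < length ts \<and> (concat (take (Suc k) ts), pr') \<in># W')"
  using assms(4)
proof cases
  case cont
  from assms(2) have tokens: "set ts \<subseteq> T" "[END] \<notin> set ts"
    and prefixes: "\<forall>k < length ts. realizable (concat (take (Suc k) ts))"
    and complete: "realizable (concat ts @ [END])"
    unfolding realizable_path_def by blast+
  have k: "k < length ts"
  proof (rule ccontr)
    assume "\<not> k < length ts"
    with assms(3) have "k = length ts" by simp
    with cont complete show False by simp
  qed
  then have "ts ! k \<in> set ts" by simp
  with tokens have "ts ! k \<in> T" "ts ! k \<noteq> [END]" by auto
  moreover have "realizable (concat (take k ts) @ ts ! k)"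
    using prefixes k by (simp add: take_Suc_conv_app_nth)
  ultimately have "(concat (take (Suc k) ts), Some (lm (concat (take k ts)) (ts ! k)))
      \<in># expand T END realizable lm (concat (take k ts))"
    using in_expand[OF assms(1)] k by (simp add: take_Suc_conv_app_nth)
  then have "(concat (take (Suc k) ts), Some (lm (concat (take k ts)) (ts ! k)))
      \<in># W - {#(concat (take k ts), pr)#} + expand T END realizable lm (concat (take k ts))"
    by (rule union_iff[THEN iffD2, OF disjI2])
  with cont k show ?thesis by auto
qed auto

lemma decoding_run_meets_path:
  assumes "finite T" and "realizable_path T END realizable ts"
    and "decoding_run T END realizable lm s d"
  shows "(\<exists>w. s n = Halted (Some w)) \<or> (\<exists>W. s n = Running W \<and> worklist_meets_path ts W)"
proof (induction n)
  case 0
  from assms(3) show ?case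
    by (auto simp: decoding_run_def worklist_meets_path_def intro!: exI[of _ 0])
next
  case (Suc n)
  then show ?case
  proof
    assume "\<exists>w. s n = Halted (Some w)"
    with decoding_run_Halted_stays[OF assms(3)] show ?case by blast
  next
    assume "\<exists>W. s n = Running W \<and> worklist_meets_path ts W"
    then obtain W k pr where W: "s n = Running W" and k: "k \<le> length ts"
      and on_path: "(concat (take k ts), pr) \<in># W"
      by (auto simp: worklist_meets_path_def)
    note step = decoding_run_Running_dstep[OF assms(3) W]
    show ?case
    proof (cases "d n = Some (concat (take k ts), pr)")
      case True
      with dstep_path_advance[OF assms(1,2) k] step
      have "(\<exists>w. s (Suc n) = Halted (Some w)) \<or> (\<exists>W' pr'. s (Suc n) = Running W' \<and>
          k < length ts \<and> (concat (take (Suc k) ts), pr') \<in># W')"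
        by simp
      then show ?thesis
        unfolding worklist_meets_path_def by (meson Suc_leI)
    next
      case False
      with dstep_keeps_entry[OF step on_path] k show ?thesis
        by (auto simp: worklist_meets_path_def)
    qed
  qed
qed

lemma fair_run_dequeues:
  assumes "decoding_run T END realizable lm s d" and "fair_run s d"
    and "\<forall>m. s m \<noteq> Halted None"
    and "s n = Running W" and "x \<in># W"
  shows "(\<exists>m w. s m = Halted (Some w)) \<or>
    (\<exists>m W'. s m = Running W' \<and> dstep T END realizable lm (Running W') (Some x) (s (Suc m)))"
proof -
  have "(\<exists>m W'. s m = Running W' \<and> d m = Some x) \<or> (\<exists>m r. s m = Halted r)"
    using assms(2,4,5) unfolding fair_run_def by blast
  then show ?thesis
  proof
    assume "\<exists>m W'. s m = Running W' \<and> d m = Some x"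
    then obtain m W' where "s m = Running W'" "d m = Some x" by blast
    with decoding_run_Running_dstep[OF assms(1)] show ?thesis by metis
  next
    assume "\<exists>m r. s m = Halted r"
    with assms(3) show ?thesis by (metis not_None_eq)
  qed
qed

lemma decoding_run_halts_Some:
  assumes "finite T" and "realizable_path T END realizable ts"
    and "decoding_run T END realizable lm s d" and "fair_run s d"
  shows "\<exists>n w. s n = Halted (Some w)"
proof (rule ccontr)
  assume no_answer: "\<nexists>n w. s n = Halted (Some w)"
  have no_bottom: "\<forall>m. s m \<noteq> Halted None"
  proof
    fix m
    from decoding_run_meets_path[OF assms(1-3), of m] show "s m \<noteq> Halted None" by auto
  qed
  have reach: "\<exists>n W pr. s n = Running W \<and> k \<le> length ts \<and> (concat (take k ts), pr) \<in># W"
    for k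
  proof (induction k)
    case 0
    from assms(3) have "s 0 = Running {#([], None)#}" by (simp add: decoding_run_def)
    then show ?case by force
  next
    case (Suc k)
    then obtain n W pr where "s n = Running W" and k: "k \<le> length ts"
      and "(concat (take k ts), pr) \<in># W" by blast
    with fair_run_dequeues[OF assms(3,4) no_bottom] no_answer
    obtain m W' where "dstep T END realizable lm (Running W') (Some (concat (take k ts), pr))
        (s (Suc m))" by blast
    with dstep_path_advance[OF assms(1,2) k] no_answer
    obtain W'' pr' where "s (Suc m) = Running W''" "k < length ts"
      and "(concat (take (Suc k) ts), pr') \<in># W''" by blast
    then show ?case using Suc_leI by blast
  qed
  \<comment> \<open>the step beyond \<open>length ts\<close> fails: dequeuing \<open>concat ts\<close> accepts \<open>concat ts @ [END]\<close>\<close>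
  from reach[of "Suc (length ts)"] show False by simp
qed

theorem mainTheorem2:
  fixes T :: "('a::finite) list set" and END :: 'a
    and parse :: "'a list \<Rightarrow> 'ast option" and phi :: "'ast \<Rightarrow> bool"
    and lm :: "'a list \<Rightarrow> 'a list \<Rightarrow> real" and realizable :: "'a list \<Rightarrow> bool"
    and s :: "nat \<Rightarrow> 'a dstate" and d :: "nat \<Rightarrow> ('a list \<times> real option) option"
  assumes vocab: "token_vocabulary T END"
    and finT: "finite T"
    and lm_range: "\<forall>w tau. 0 \<le> lm w tau \<and> lm w tau \<le> 1"
    and end_last: "\<forall>w. sat phi (parse w) \<longrightarrow> (\<exists>w0. w = w0 @ [END] \<and> END \<notin> set w0)"
    and over: "over_approximate parse phi realizable"
    and cons: "consistent parse phi END realizable"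
    and run: "decoding_run T END realizable lm s d"
    and fair: "fair_run s d"
    and ex: "\<exists>wstar. sat phi (parse wstar)"
  shows "\<exists>n w. s n = Halted (Some w) \<and> sat phi (parse w)"
proof -
  obtain w0 where "sat phi (parse (w0 @ [END]))" "END \<notin> set w0"
    using ex end_last by metis
  then obtain ts where "realizable_path T END realizable ts"
    using realizable_path_exists[OF vocab over] by blast
  then obtain n w where "s n = Halted (Some w)"
    using decoding_run_halts_Some[OF finT _ run fair] by blast
  with decoding_run_Halted_Some_sat[OF cons run] show ?thesis by blast
qed

end
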